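(* Let $B$ be a minimum-weight basis of the weighted uncertainty matroid $\mathcal{M}=(E,\mathcal{I},A,w)$ and let $Q$ be a certificate that verifies $B$. Let $e\in B$ and $e'\notin B$ with $w_e=w_{e'}$ be such that $B'=(B\setminus\{e\})\cup\{e'\}$ is independent. If each $f\in\{e,e'\}$ is either trivial or contained in $Q$, then $Q$ also verifies $B'$.
   Context: A weighted uncertainty matroid $\mathcal{M}=(E,\mathcal{I},A,w)$ consists of a matroid $M=(E,\mathcal{I})$ on a finite set $E$, for each $e\in E$ a non-empty finite union $A_e$ of bounded real intervals (each open or closed), and a weight $w_e\in A_e$. An element $e$ is trivial if $A_e=\{w_e\}$. A minimum-weight basis is a basis of $M$ minimizing the sum of weights. A weight assignment is $w^*:E\to\mathbb{R}$ with $w^*_e\in A_e$, consistent with $Q$ if $w^*_e=w_e$ for $e\in Q$. $Q$ verifies a basis $B$ (is a certificate for $B$) if for every weight assignment consistent with $Q$, $B$ is a minimum-weight basis with respect to it. *)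

theory Defs
  imports Complex_Main
begin

definition matroid :: "'a set \<Rightarrow> ('a set \<Rightarrow> bool) \<Rightarrow> bool" where
  "matroid E indep \<longleftrightarrow>
     finite E \<and>
     (\<forall>I. indep I \<longrightarrow> I \<subseteq> E) \<and>
     indep {} \<and>
     (\<forall>I J. indep J \<and> I \<subseteq> J \<longrightarrow> indep I) \<and>
     (\<forall>I J. indep I \<and> indep J \<and> card I < card J \<longrightarrow> (\<exists>x\<in>J - I. indep (insert x I)))"

definition basis :: "'a set \<Rightarrow> ('a set \<Rightarrow> bool) \<Rightarrow> 'a set \<Rightarrow> bool" where
  "basis E indep B \<longleftrightarrow> indep B \<and> (\<forall>x\<in>E - B. \<not> indep (insert x B))"

definition min_weight_basis :: "'a set \<Rightarrow> ('a set \<Rightarrow> bool) \<Rightarrow> ('a \<Rightarrow> real) \<Rightarrow> 'a set \<Rightarrow> bool" where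
  "min_weight_basis E indep w B \<longleftrightarrow>
     basis E indep B \<and> (\<forall>B'. basis E indep B' \<longrightarrow> (\<Sum>x\<in>B. w x) \<le> (\<Sum>x\<in>B'. w x))"

definition bounded_interval :: "real set \<Rightarrow> bool" where
  "bounded_interval S \<longleftrightarrow> (\<exists>a b. S = {a..b} \<or> S = {a<..<b})"

definition uncertainty_set :: "real set \<Rightarrow> bool" where
  "uncertainty_set S \<longleftrightarrow> S \<noteq> {} \<and>
     (\<exists>\<F>. finite \<F> \<and> (\<forall>I\<in>\<F>. bounded_interval I) \<and> S = \<Union>\<F>)"

definition weighted_uncertainty_matroid ::
  "'a set \<Rightarrow> ('a set \<Rightarrow> bool) \<Rightarrow> ('a \<Rightarrow> real set) \<Rightarrow> ('a \<Rightarrow> real) \<Rightarrow> bool" where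
  "weighted_uncertainty_matroid E indep A w \<longleftrightarrow>
     matroid E indep \<and> (\<forall>e\<in>E. uncertainty_set (A e) \<and> w e \<in> A e)"

definition trivial_elem :: "('a \<Rightarrow> real set) \<Rightarrow> ('a \<Rightarrow> real) \<Rightarrow> 'a \<Rightarrow> bool" where
  "trivial_elem A w e \<longleftrightarrow> A e = {w e}"

definition consistent_assignment ::
  "'a set \<Rightarrow> ('a \<Rightarrow> real set) \<Rightarrow> ('a \<Rightarrow> real) \<Rightarrow> 'a set \<Rightarrow> ('a \<Rightarrow> real) \<Rightarrow> bool" where
  "consistent_assignment E A w Q w' \<longleftrightarrow>
     (\<forall>e\<in>E. w' e \<in> A e) \<and> (\<forall>e\<in>Q. w' e = w e)"

definition verifies ::
  "'a set \<Rightarrow> ('a set \<Rightarrow> bool) \<Rightarrow> ('a \<Rightarrow> real set) \<Rightarrow> ('a \<Rightarrow> real) \<Rightarrow> 'a set \<Rightarrow> 'a set \<Rightarrow> bool" where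
  "verifies E indep A w Q B \<longleftrightarrow>
     (\<forall>w'. consistent_assignment E A w Q w' \<longrightarrow> min_weight_basis E indep w' B)"

end

theory Submission
  imports Defs
begin

text \<open>For every admissible weight assignment \<open>w'\<close>, the basis \<open>B\<close> is of minimum weight, and
  both \<open>e\<close> and \<open>e'\<close> keep their weights, so \<open>w' e = w' e'\<close>. Exchanging \<open>e\<close> for \<open>e'\<close>
  therefore preserves the weight, and by the augmentation axiom an independent set of
  the cardinality of a basis is itself a basis; hence \<open>B'\<close> is a minimum-weight basis
  for \<open>w'\<close> as well.\<close>

lemma matroid_indep_subset:
  assumes "matroid E indep" and "indep I"
  shows "I \<subseteq> E"
  using assms unfolding matroid_def by blast

lemma matroid_indep_finite:
  assumes "matroid E indep" and "indep I"
  shows "finite I"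
proof (rule finite_subset)
  show "I \<subseteq> E" using assms by (rule matroid_indep_subset)
  show "finite E" using assms(1) unfolding matroid_def by simp
qed

lemma basis_if_indep_card_eq:
  assumes m: "matroid E indep" and B: "basis E indep B"
    and I: "indep I" and card_eq: "card I = card B"
  shows "basis E indep I"
  unfolding basis_def
proof (intro conjI ballI notI)
  show "indep I" by fact
  fix x assume x: "x \<in> E - I" and indep_x: "indep (insert x I)"
  have augment: "\<And>I J. indep I \<Longrightarrow> indep J \<Longrightarrow> card I < card J \<Longrightarrow>
      \<exists>y\<in>J - I. indep (insert y I)"
    using m unfolding matroid_def by blast
  have "indep B" using B unfolding basis_def by simp
  moreover have "card B < card (insert x I)"
    using x card_eq matroid_indep_finite[OF m I] by simp
  ultimately obtain y where y: "y \<in> insert x I - B" and indep_y: "indep (insert y B)"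
    using augment[OF _ indep_x] by blast
  have "y \<in> E" using matroid_indep_subset[OF m indep_x] y by blast
  with B y indep_y show False unfolding basis_def by blast
qed

lemma card_exchange:
  assumes "finite B" and "e \<in> B" and "e' \<notin> B"
  shows "card (B - {e} \<union> {e'}) = card B"
proof -
  have "card (B - {e} \<union> {e'}) = Suc (card (B - {e}))"
    using assms by simp
  also have "\<dots> = card B"
    using assms(1,2) by (rule card_Suc_Diff1)
  finally show ?thesis .
qed

lemma sum_exchange:
  fixes w :: "'a \<Rightarrow> 'b::ab_group_add"
  assumes "finite B" and "e \<in> B" and "e' \<notin> B"
  shows "(\<Sum>x\<in>B - {e} \<union> {e'}. w x) = (\<Sum>x\<in>B. w x) - w e + w e'"
  using assms by (simp add: sum_diff1 add.commute)

lemma min_weight_basis_exchange: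
  assumes m: "matroid E indep" and B: "min_weight_basis E indep w B"
    and "e \<in> B" and "e' \<notin> B" and "w e = w e'"
    and indep_exchange: "indep (B - {e} \<union> {e'})"
  shows "min_weight_basis E indep w (B - {e} \<union> {e'})"
proof -
  have basis_B: "basis E indep B" using B unfolding min_weight_basis_def by blast
  have "finite B"
    using basis_B matroid_indep_finite[OF m] unfolding basis_def by simp
  have "basis E indep (B - {e} \<union> {e'})"
    using card_exchange[OF \<open>finite B\<close> assms(3,4)]
    by (rule basis_if_indep_card_eq[OF m basis_B indep_exchange])
  moreover have "(\<Sum>x\<in>B - {e} \<union> {e'}. w x) = (\<Sum>x\<in>B. w x)"
    using sum_exchange[OF \<open>finite B\<close> assms(3,4), of w] assms(5) by simp
  ultimately show ?thesis using B unfolding min_weight_basis_def by simp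
qed

lemma consistent_assignment_eq:
  assumes "consistent_assignment E A w Q w'" and "f \<in> E"
    and "trivial_elem A w f \<or> f \<in> Q"
  shows "w' f = w f"
  using assms unfolding consistent_assignment_def trivial_elem_def by auto

theorem lemma12:
  fixes E :: "'a set" and indep :: "'a set \<Rightarrow> bool"
    and A :: "'a \<Rightarrow> real set" and w :: "'a \<Rightarrow> real"
    and Q B :: "'a set" and e e' :: 'a
  assumes "weighted_uncertainty_matroid E indep A w"
    and "min_weight_basis E indep w B"
    and "verifies E indep A w Q B"
    and "e \<in> B" and "e' \<in> E" and "e' \<notin> B"
    and "w e = w e'"
    and "indep ((B - {e}) \<union> {e'})"
    and "\<forall>f\<in>{e, e'}. trivial_elem A w f \<or> f \<in> Q"
  shows "verifies E indep A w Q ((B - {e}) \<union> {e'})"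
  unfolding verifies_def
proof (intro allI impI)
  fix w' assume w': "consistent_assignment E A w Q w'"
  have m: "matroid E indep"
    using assms(1) unfolding weighted_uncertainty_matroid_def by blast
  have B: "min_weight_basis E indep w' B"
    using assms(3) w' unfolding verifies_def by blast
  have "indep B" using B unfolding min_weight_basis_def basis_def by simp
  then have "e \<in> E" using matroid_indep_subset[OF m] assms(4) by blast
  then have "w' e = w' e'"
    using consistent_assignment_eq[OF w'] assms(5,7,9) by simp
  then show "min_weight_basis E indep w' ((B - {e}) \<union> {e'})"
    by (rule min_weight_basis_exchange[OF m B assms(4,6) _ assms(8)])
qed

end
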